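(* Let $n\ge1$, $m\ge0$, $a,b>0$, $I_{m,n,s}(x)=\int_s^x(1+t)^nt^m\,dt$, $\mu_s=\frac{(1+a)^na^mb+nI_{m,n-1,s}(a)}{I_{m,n,s}(a)}$ and $\tilde\psi_s(x)=\frac{\mu_sI_{m,n,s}(x)-nI_{m,n-1,s}(x)}{(1+x)^nx^m}$ for $s\in[0,a)$. Assume $\mu_0\le n$ and let $\lambda\in[0,a)$ be the unique solution of $\mu_\lambda(1+\lambda)=n$. Then for all $s\in(0,a)$ with $s\neq\lambda$ and all $x\in(0,a)$, $\tilde\psi_s(x)<\tilde\psi_\lambda(x)$. *)

theory Defs
  imports "HOL-Analysis.Analysis"
begin

definition Iint :: "real \<Rightarrow> nat \<Rightarrow> real \<Rightarrow> real \<Rightarrow> real" where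
  "Iint m n s x = (LBINT t=ereal s..ereal x. (1 + t) ^ n * t powr m)"

definition mu :: "real \<Rightarrow> nat \<Rightarrow> real \<Rightarrow> real \<Rightarrow> real \<Rightarrow> real" where
  "mu m n a b s = ((1 + a) ^ n * a powr m * b + real n * Iint m (n - 1) s a) / Iint m n s a"

definition psi_tilde :: "real \<Rightarrow> nat \<Rightarrow> real \<Rightarrow> real \<Rightarrow> real \<Rightarrow> real \<Rightarrow> real" where
  "psi_tilde m n a b s x =
     (mu m n a b s * Iint m n s x - real n * Iint m (n - 1) s x) / ((1 + x) ^ n * x powr m)"

end

theory Submission
  imports Defs
begin

text \<open>
  Write A = (1+a)^n a^m b. Splitting I_{m,k,s}(x) = I_{m,k,s}(a) - I_{m,k,x}(a) and using
  mu_s I_{m,n,s}(a) = A + n I_{m,n-1,s}(a), the numerator of psi_s(x) becomes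
  A + n I_{m,n-1,x}(a) - mu_s I_{m,n,x}(a): it depends on s only through mu_s and is strictly
  decreasing in it. So it suffices that lam is the strict global minimiser of s |-> mu_s on [0,a).
  Differentiating, mu'(s) = (1+s)^(n-1) s^m / I_{m,n,s}(a) * g(s) with g(s) = mu_s (1+s) - n.
  Now g(0) <= 0, g(s) -> infinity as s -> a because I_{m,n,s}(a) -> 0, and lam is the only zero
  of g; hence g < 0 on [0,lam) and g > 0 on (lam,a), so mu_s decreases strictly up to lam and
  increases strictly after it.
\<close>

lemma integral_upper_has_real_derivative:
  fixes f :: "real \<Rightarrow> real"
  assumes "continuous_on {c..} f" and "c < t"
  shows "((\<lambda>x. integral {c..x} f) has_real_derivative f t) (at t)"
proof -
  have "continuous_on {c..t+1} f"
    using assms(1) by (rule continuous_on_subset) auto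
  then have "((\<lambda>x. integral {c..x} f) has_real_derivative f t) (at t within {c..t+1})"
    using assms(2) by (intro integral_has_real_derivative) auto
  moreover have "t \<in> interior {c..t+1}"
    using assms(2) by simp
  ultimately show ?thesis
    by (metis at_within_interior)
qed

lemma continuous_on_integral_upper:
  fixes f :: "real \<Rightarrow> real"
  assumes "continuous_on {c..} f"
  shows "continuous_on {c..d} (\<lambda>x. integral {c..x} f)"
proof (intro indefinite_integral_continuous_1 integrable_continuous_interval)
  show "continuous_on {c..d} f"
    using assms by (rule continuous_on_subset) auto
qed

lemma integral_upper_strict_mono:
  fixes f :: "real \<Rightarrow> real"
  assumes "continuous_on {c..} f" and "\<And>t. c < t \<Longrightarrow> 0 < f t"
    and "c \<le> s" and "s < x"
  shows "integral {c..s} f < integral {c..x} f"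
proof (rule DERIV_pos_imp_increasing_open[OF \<open>s < x\<close>])
  fix t assume "s < t" "t < x"
  then show "\<exists>y. ((\<lambda>x. integral {c..x} f) has_real_derivative y) (at t) \<and> 0 < y"
    using assms integral_upper_has_real_derivative by force
next
  show "continuous_on {s..x} (\<lambda>x. integral {c..x} f)"
    using continuous_on_integral_upper[OF assms(1), of x]
    by (rule continuous_on_subset) (use assms in auto)
qed

lemma no_zero_imp_same_sign:
  fixes g :: "real \<Rightarrow> real"
  assumes "continuous_on {u..v} g" "u \<le> v" "\<And>t. u \<le> t \<Longrightarrow> t \<le> v \<Longrightarrow> g t \<noteq> 0"
  shows "0 < g u \<longleftrightarrow> 0 < g v"
  using IVT'[of g u 0 v] IVT2'[of g v 0 u] assms by force

lemma sign_around_unique_zero: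
  fixes g :: "real \<Rightarrow> real"
  assumes cont: "continuous_on {c..<d} g"
    and unique: "\<And>t. c \<le> t \<Longrightarrow> t < d \<Longrightarrow> g t = 0 \<Longrightarrow> t = l"
    and "c \<le> l" "l < d" "g c \<le> 0"
    and pos_near_d: "eventually (\<lambda>t. 0 < g t) (at_left d)"
  shows "c \<le> t \<Longrightarrow> t < l \<Longrightarrow> g t < 0"
    and "l < t \<Longrightarrow> t < d \<Longrightarrow> 0 < g t"
proof -
  assume "c \<le> t" "t < l"
  have "g y \<noteq> 0" if "c \<le> y" "y \<le> t" for y
    using unique[of y] that \<open>t < l\<close> \<open>l < d\<close> by fastforce
  then have "0 < g c \<longleftrightarrow> 0 < g t"
    using \<open>c \<le> t\<close> \<open>t < l\<close> \<open>l < d\<close>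
    by (intro no_zero_imp_same_sign continuous_on_subset[OF cont]) auto
  then show "g t < 0"
    using \<open>g c \<le> 0\<close> unique[of t] \<open>c \<le> t\<close> \<open>t < l\<close> \<open>l < d\<close> by fastforce
next
  assume "l < t" "t < d"
  from pos_near_d eventually_at_left_real[OF \<open>t < d\<close>]
  have "eventually (\<lambda>t'. t' \<in> {t<..<d} \<and> 0 < g t') (at_left d)"
    by eventually_elim auto
  then obtain t' where t': "t < t'" "t' < d" "0 < g t'"
    using eventually_happens'[OF trivial_limit_at_left_real] by auto
  have "g y \<noteq> 0" if "t \<le> y" "y \<le> t'" for y
    using unique[of y] that t' \<open>l < t\<close> \<open>c \<le> l\<close> by fastforce
  then have "0 < g t \<longleftrightarrow> 0 < g t'"
    using t' \<open>l < t\<close> \<open>c \<le> l\<close>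
    by (intro no_zero_imp_same_sign continuous_on_subset[OF cont]) auto
  then show "0 < g t"
    using t' by simp
qed

lemma strict_min_of_derivative_sign_change:
  fixes f f' :: "real \<Rightarrow> real"
  assumes cont: "continuous_on {c..<d} f"
    and deriv: "\<And>t. c < t \<Longrightarrow> t < d \<Longrightarrow> (f has_real_derivative f' t) (at t)"
    and dec: "\<And>t. c < t \<Longrightarrow> t < l \<Longrightarrow> f' t < 0"
    and inc: "\<And>t. l < t \<Longrightarrow> t < d \<Longrightarrow> 0 < f' t"
    and "c \<le> l" "l < d" "c \<le> s" "s < d" "s \<noteq> l"
  shows "f l < f s"
proof (cases "s < l")
  case True
  show ?thesis
  proof (rule DERIV_neg_imp_decreasing_open[OF True])
    show "continuous_on {s..l} f"
      using cont by (rule continuous_on_subset) (use assms in auto)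
  qed (use assms in \<open>force intro!: deriv dec\<close>)
next
  case False
  then have "l < s"
    using \<open>s \<noteq> l\<close> by simp
  then show ?thesis
  proof (rule DERIV_pos_imp_increasing_open)
    show "continuous_on {l..s} f"
      using cont by (rule continuous_on_subset) (use assms in auto)
  qed (use assms in \<open>force intro!: deriv inc\<close>)
qed

text \<open>The integrand of \<^const>\<open>Iint\<close>, except at t = 0 when m = 0: there 0 powr 0 = 0,
  and the case split makes the weight continuous on [0, \<infinity>).\<close>
definition weight :: "real \<Rightarrow> nat \<Rightarrow> real \<Rightarrow> real" where
  "weight m k t = (1 + t) ^ k * (if m = 0 then 1 else t powr m)"

definition weight_primitive :: "real \<Rightarrow> nat \<Rightarrow> real \<Rightarrow> real" where
  "weight_primitive m k x = integral {0..x} (weight m k)"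

lemma continuous_on_weight: "m \<ge> 0 \<Longrightarrow> continuous_on {0..} (weight m k)"
  unfolding weight_def
  by (cases "m = 0") (auto intro!: continuous_intros continuous_on_powr')

lemma weight_pos: "0 < t \<Longrightarrow> 0 < weight m k t"
  by (simp add: weight_def)

lemma weight_eq: "0 < t \<Longrightarrow> weight m k t = (1 + t) ^ k * t powr m"
  by (simp add: weight_def)

lemma weight_Suc: "weight m (Suc k) t = (1 + t) * weight m k t"
  by (simp add: weight_def)

lemma weight_primitive_has_real_derivative:
  "m \<ge> 0 \<Longrightarrow> 0 < t \<Longrightarrow> (weight_primitive m k has_real_derivative weight m k t) (at t)"
  unfolding weight_primitive_def[abs_def]
  by (rule integral_upper_has_real_derivative[OF continuous_on_weight])

lemma continuous_on_weight_primitive: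
  "m \<ge> 0 \<Longrightarrow> continuous_on {0..d} (weight_primitive m k)"
  unfolding weight_primitive_def[abs_def]
  by (rule continuous_on_integral_upper[OF continuous_on_weight])

lemma weight_primitive_strict_mono:
  "m \<ge> 0 \<Longrightarrow> 0 \<le> s \<Longrightarrow> s < x \<Longrightarrow> weight_primitive m k s < weight_primitive m k x"
  unfolding weight_primitive_def
  by (rule integral_upper_strict_mono[OF continuous_on_weight weight_pos])

lemma Iint_eq_weight_primitive_diff:
  assumes "m \<ge> 0" "0 \<le> s" "0 \<le> x"
  shows "Iint m k s x = weight_primitive m k x - weight_primitive m k s"
proof -
  have "Iint m k s x = (LBINT t=ereal s..ereal x. weight m k t)"
    unfolding Iint_def weight_def
    by (rule interval_integral_cong)
      (use assms in \<open>auto simp: einterval_def min_def max_def split: if_splits\<close>)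
  also have "\<dots> = weight_primitive m k x - weight_primitive m k s"
  proof (rule interval_integral_FTC_finite)
    show "continuous_on {min s x..max s x} (weight m k)"
      using continuous_on_weight[OF assms(1)] by (rule continuous_on_subset) (use assms in auto)
  next
    fix y assume "min s x \<le> y" "y \<le> max s x"
    have "(weight_primitive m k has_real_derivative weight m k y) (at y within {0..max s x})"
      unfolding weight_primitive_def[abs_def]
      using \<open>min s x \<le> y\<close> \<open>y \<le> max s x\<close> assms
      by (intro integral_has_real_derivative continuous_on_subset[OF continuous_on_weight]) auto
    then have "(weight_primitive m k has_real_derivative weight m k y) (at y within {min s x..max s x})"
      by (rule DERIV_subset) (use assms in auto)
    then show "(weight_primitive m k has_vector_derivative weight m k y) (at y within {min s x..max s x})"
      by (simp add: has_real_derivative_iff_has_vector_derivative)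
  qed
  finally show ?thesis .
qed

lemma Iint_pos: "m \<ge> 0 \<Longrightarrow> 0 \<le> s \<Longrightarrow> s < x \<Longrightarrow> 0 < Iint m k s x"
  using weight_primitive_strict_mono[of m s x k] by (simp add: Iint_eq_weight_primitive_diff)

lemma Iint_add:
  "m \<ge> 0 \<Longrightarrow> 0 \<le> s \<Longrightarrow> 0 \<le> x \<Longrightarrow> 0 \<le> y \<Longrightarrow> Iint m k s x + Iint m k x y = Iint m k s y"
  by (simp add: Iint_eq_weight_primitive_diff)

lemma mu_eq_weight_primitive:
  assumes "m \<ge> 0" "0 \<le> s" "0 \<le> a"
  shows "mu m n a b s = ((1 + a) ^ n * a powr m * b
           + real n * (weight_primitive m (n - 1) a - weight_primitive m (n - 1) s))
         / (weight_primitive m n a - weight_primitive m n s)"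
  using assms by (simp add: mu_def Iint_eq_weight_primitive_diff)

lemma continuous_on_mu:
  assumes "m \<ge> 0"
  shows "continuous_on {0..<a} (mu m n a b)"
proof -
  let ?P = "weight_primitive m n" and ?Q = "weight_primitive m (n - 1)"
  have "continuous_on {0..<a} (weight_primitive m k)" for k
    by (rule continuous_on_subset[OF continuous_on_weight_primitive[OF assms, of a]]) auto
  moreover have "?P a - ?P s \<noteq> 0" if "s \<in> {0..<a}" for s
    using that weight_primitive_strict_mono[OF assms, of s a n] by auto
  ultimately have "continuous_on {0..<a}
      (\<lambda>s. ((1 + a) ^ n * a powr m * b + real n * (?Q a - ?Q s)) / (?P a - ?P s))"
    by (intro continuous_intros) auto
  then show ?thesis
    by (rule continuous_on_eq) (simp add: assms mu_eq_weight_primitive)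
qed

lemma mu_has_real_derivative:
  assumes "n \<ge> 1" "m \<ge> 0" "0 < s" "s < a"
  shows "(mu m n a b has_real_derivative
           (1 + s) ^ (n - 1) * s powr m / Iint m n s a * (mu m n a b s * (1 + s) - real n)) (at s)"
proof -
  let ?P = "weight_primitive m n" and ?Q = "weight_primitive m (n - 1)"
  let ?A = "(1 + a) ^ n * a powr m * b"
  have R: "?P a - ?P s \<noteq> 0"
    using weight_primitive_strict_mono[of m s a n] assms by simp
  have W: "weight m n s = (1 + s) * weight m (n - 1) s"
    using assms(1) weight_Suc[of m "n - 1"] by simp
  have "((\<lambda>t. (?A + real n * (?Q a - ?Q t)) / (?P a - ?P t)) has_real_derivative
      weight m (n - 1) s / (?P a - ?P s)
        * ((?A + real n * (?Q a - ?Q s)) / (?P a - ?P s) * (1 + s) - real n)) (at s)"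
    using weight_primitive_has_real_derivative[OF assms(2,3)] R
    by (auto intro!: derivative_eq_intros simp: W field_simps)
  then have "(mu m n a b has_real_derivative
      weight m (n - 1) s / (?P a - ?P s)
        * ((?A + real n * (?Q a - ?Q s)) / (?P a - ?P s) * (1 + s) - real n)) (at s)"
  proof (rule has_field_derivative_transform_within_open)
    show "open {0::real<..}" "s \<in> {0<..}"
      using assms by auto
  qed (use assms in \<open>auto simp: mu_eq_weight_primitive\<close>)
  then show ?thesis
    by (rule DERIV_cong)
      (use assms in \<open>simp add: weight_eq mu_eq_weight_primitive Iint_eq_weight_primitive_diff\<close>)
qed

lemma mu_tendsto_at_top:
  assumes "m \<ge> 0" "0 < a" "0 < b"
  shows "filterlim (mu m n a b) at_top (at_left a)"
proof -
  let ?P = "weight_primitive m n" and ?Q = "weight_primitive m (n - 1)"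
  let ?A = "(1 + a) ^ n * a powr m * b"
  have "isCont ?P a"
    using weight_primitive_has_real_derivative[OF assms(1,2)] by (rule DERIV_isCont)
  then have "(?P \<longlongrightarrow> ?P a) (at_left a)"
    by (simp add: isCont_def filterlim_at_split)
  then have "((\<lambda>t. ?P a - ?P t) \<longlongrightarrow> 0) (at_left a)"
    by (auto intro!: tendsto_eq_intros)
  moreover have near_a: "eventually (\<lambda>t. t \<in> {0<..<a}) (at_left a)"
    using eventually_at_left_real[OF assms(2)] .
  then have "eventually (\<lambda>t. 0 < ?P a - ?P t) (at_left a)"
    by eventually_elim (use assms weight_primitive_strict_mono in force)
  ultimately have "filterlim (\<lambda>t. ?A / (?P a - ?P t)) at_top (at_left a)"
    using assms by (intro LIM_at_top_divide[OF tendsto_const]) auto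
  moreover from near_a have "eventually (\<lambda>t. ?A / (?P a - ?P t) \<le> mu m n a b t) (at_left a)"
  proof eventually_elim
    case (elim t)
    then have "?P t < ?P a" "?Q t < ?Q a"
      using assms weight_primitive_strict_mono by auto
    then show ?case
      using assms elim by (simp add: mu_eq_weight_primitive divide_right_mono)
  qed
  ultimately show ?thesis
    by (rule filterlim_at_top_mono)
qed

lemma mu_mul_one_plus_sign:
  assumes "m \<ge> 0" "0 < a" "0 < b" "mu m n a b 0 \<le> real n" "0 \<le> lam" "lam < a"
    and unique: "\<And>l. 0 \<le> l \<Longrightarrow> l < a \<Longrightarrow> mu m n a b l * (1 + l) = real n \<Longrightarrow> l = lam"
  shows "0 \<le> t \<Longrightarrow> t < lam \<Longrightarrow> mu m n a b t * (1 + t) < real n"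
    and "lam < t \<Longrightarrow> t < a \<Longrightarrow> real n < mu m n a b t * (1 + t)"
proof -
  define g where "g t = mu m n a b t * (1 + t) - real n" for t
  have g_cont: "continuous_on {0..<a} g"
    unfolding g_def using continuous_on_mu[OF assms(1)] by (intro continuous_intros)
  have g_zero: "t = lam" if "0 \<le> t" "t < a" "g t = 0" for t
    using that by (intro unique) (simp_all add: g_def)
  have g_0: "g 0 \<le> 0"
    using assms(4) by (simp add: g_def)
  have "eventually (\<lambda>t. real n < mu m n a b t) (at_left a)"
    using mu_tendsto_at_top[OF assms(1-3), where n = n] by (simp add: filterlim_at_top_dense)
  with eventually_at_left_real[OF assms(2)] have g_near_a: "eventually (\<lambda>t. 0 < g t) (at_left a)"
  proof eventually_elim
    case (elim t)
    then have "real n * (1 + t) < mu m n a b t * (1 + t)"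
      by (intro mult_strict_right_mono) auto
    moreover have "0 \<le> real n * t"
      using elim by simp
    ultimately show ?case
      by (simp add: g_def algebra_simps)
  qed
  have "g t < 0" if "0 \<le> t" "t < lam"
    using g_cont g_zero assms(5,6) g_0 g_near_a that by (rule sign_around_unique_zero(1))
  then show "0 \<le> t \<Longrightarrow> t < lam \<Longrightarrow> mu m n a b t * (1 + t) < real n"
    by (simp add: g_def)
  have "0 < g t" if "lam < t" "t < a"
    using g_cont g_zero assms(5,6) g_0 g_near_a that by (rule sign_around_unique_zero(2))
  then show "lam < t \<Longrightarrow> t < a \<Longrightarrow> real n < mu m n a b t * (1 + t)"
    by (simp add: g_def)
qed

lemma mu_strict_min:
  assumes "n \<ge> 1" "m \<ge> 0" "0 < a" "0 < b" "mu m n a b 0 \<le> real n" "0 \<le> lam" "lam < a"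
    and unique: "\<And>l. 0 \<le> l \<Longrightarrow> l < a \<Longrightarrow> mu m n a b l * (1 + l) = real n \<Longrightarrow> l = lam"
    and "0 \<le> s" "s < a" "s \<noteq> lam"
  shows "mu m n a b lam < mu m n a b s"
proof (rule strict_min_of_derivative_sign_change
    [OF continuous_on_mu[OF assms(2)] mu_has_real_derivative[OF assms(1,2)]])
  fix t
  assume t: "0 < t" "t < lam"
  then have "t < a"
    using assms(7) by linarith
  have "mu m n a b t * (1 + t) < real n"
    using assms(2-7) unique less_imp_le[OF t(1)] t(2) by (rule mu_mul_one_plus_sign(1))
  then show "(1 + t) ^ (n - 1) * t powr m / Iint m n t a * (mu m n a b t * (1 + t) - real n) < 0"
    using Iint_pos[OF assms(2), of t a n] t(1) \<open>t < a\<close> by (intro mult_pos_neg) simp_all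
next
  fix t
  assume t: "lam < t" "t < a"
  then have "0 < t"
    using assms(6) by linarith
  have "real n < mu m n a b t * (1 + t)"
    using assms(2-7) unique t by (rule mu_mul_one_plus_sign(2))
  then show "0 < (1 + t) ^ (n - 1) * t powr m / Iint m n t a * (mu m n a b t * (1 + t) - real n)"
    using Iint_pos[OF assms(2), of t a n] \<open>0 < t\<close> t(2) by (intro mult_pos_pos) simp_all
qed (use assms(6,7,9-11) in auto)

lemma psi_tilde_eq:
  assumes "m \<ge> 0" "0 \<le> s" "s < a" "0 \<le> x"
  shows "psi_tilde m n a b s x =
    ((1 + a) ^ n * a powr m * b + real n * Iint m (n - 1) x a - mu m n a b s * Iint m n x a)
      / ((1 + x) ^ n * x powr m)"
proof -
  have mu_Iint:
    "mu m n a b s * Iint m n s a = (1 + a) ^ n * a powr m * b + real n * Iint m (n - 1) s a"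
    using Iint_pos[OF assms(1-3), of n] by (simp add: mu_def)
  have Iint_split: "Iint m k s x = Iint m k s a - Iint m k x a" for k
    using Iint_add[of m s x a k] assms by simp
  show ?thesis
    unfolding psi_tilde_def Iint_split by (simp add: right_diff_distrib mu_Iint)
qed

lemma psi_tilde_less_iff_mu_less:
  assumes "m \<ge> 0" "0 \<le> s" "s < a" "0 \<le> l" "l < a" "0 < x" "x < a"
  shows "psi_tilde m n a b s x < psi_tilde m n a b l x \<longleftrightarrow> mu m n a b l < mu m n a b s"
proof -
  have "0 < (1 + x) ^ n * x powr m" "0 < Iint m n x a"
    using assms Iint_pos[of m x a n] by auto
  then show ?thesis
    using assms by (simp add: psi_tilde_eq field_simps)
qed

theorem corollary3p5:
  fixes n :: nat and m a b lam :: real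
  assumes "n \<ge> 1" and "m \<ge> 0" and "a > 0" and "b > 0"
    and "mu m n a b 0 \<le> real n"
    and "0 \<le> lam" and "lam < a" and "mu m n a b lam * (1 + lam) = real n"
    and "\<forall>l. 0 \<le> l \<and> l < a \<and> mu m n a b l * (1 + l) = real n \<longrightarrow> l = lam"
  shows "\<forall>s x. 0 < s \<and> s < a \<and> s \<noteq> lam \<and> 0 < x \<and> x < a \<longrightarrow>
           psi_tilde m n a b s x < psi_tilde m n a b lam x"
proof (intro allI impI)
  fix s x assume sx: "0 < s \<and> s < a \<and> s \<noteq> lam \<and> 0 < x \<and> x < a"
  have unique: "\<And>l. 0 \<le> l \<Longrightarrow> l < a \<Longrightarrow> mu m n a b l * (1 + l) = real n \<Longrightarrow> l = lam"
    using assms(9) by blast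
  have "mu m n a b lam < mu m n a b s"
    using sx by (intro mu_strict_min[OF assms(1-7) unique]) auto
  then show "psi_tilde m n a b s x < psi_tilde m n a b lam x"
    using sx assms(2,6,7) by (simp add: psi_tilde_less_iff_mu_less)
qed

end
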